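(* With the notation below, let $x\in X^{(\boldsymbol\alpha)}$. Then there is a bijection between $H_1\cdot[x]_{H_2}$ (a subset of the orbit set $H_2\backslash X^{(\boldsymbol\alpha)}$ for the action $\varGamma_2$) and $F^{(\boldsymbol\alpha)}\mathbb Z^N\backslash\mathbb Z^N$ that commutes with the action of $H_1$. Here $H_1$ acts on $H_2\backslash X^{(\boldsymbol\alpha)}$ by $f\cdot[z]_{H_2}=[\varGamma_1(f,z)]_{H_2}$ and on $F^{(\boldsymbol\alpha)}\mathbb Z^N\backslash\mathbb Z^N$ by $f\cdot[\boldsymbol\omega]=[\boldsymbol\omega+\psi(f)]$.
   Context: Fix $N\ge1$, integers $m_j\ge1$, $p_j\ge0$ ($1\le j\le N$), and an integer matrix $(B_{j,k})$. For $m\ge1,p\ge0$ let $\Lambda(m,p)=\{(\lambda_i)_{i\in\mathbb Z}: \lambda_i\in\mathbb Z,\ \lambda_1=0,\ \lambda_i\le\lambda_{i+1},\ \lambda_{i+m}=\lambda_i+p\ \forall i\}$, and for a positive common divisor $\alpha$ of $m,p$ (every positive integer divides $0$) let $\Lambda^{(\alpha)}(m,p)=\{\lambda\in\Lambda(m/\alpha,p/\alpha):\lambda\notin\Lambda(m/\alpha',p/\alpha')$ for every common divisor $\alpha'>\alpha\}$. Let $X_1=\mathbb Z^N$ (column vectors), $X_2=\prod_{j}\Lambda(m_j,p_j)$, elements $\boldsymbol\lambda=(\lambda^{(j)}_i)$. $H_2$ is the free abelian group on $s_1,\dots,s_N$; for $g=\sum_kn_ks_k$: $\Upsilon(g,\boldsymbol\lambda)=(\lambda^{(j)}_{n_j+i}-\lambda^{(j)}_{n_j+1})_{i,j}$,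 $\varphi(g,\boldsymbol\omega,\boldsymbol\lambda)=\boldsymbol\omega+(\lambda^{(j)}_{n_j+1}+\sum_kB_{j,k}n_k)_j$, $\varGamma_2(g,(\boldsymbol\omega,\boldsymbol\lambda))=(\varphi(g,\boldsymbol\omega,\boldsymbol\lambda),\Upsilon(g,\boldsymbol\lambda))$. $H_1$ is an abelian group with a surjective group homomorphism $\psi:H_1\to\mathbb Z^N$, acting by $\varGamma_1(f,(\boldsymbol\omega,\boldsymbol\lambda))=(\boldsymbol\omega+\psi(f),\boldsymbol\lambda)$. Fix $\boldsymbol\alpha=(\alpha_j)$ with $\alpha_j$ a positive common divisor of $m_j,p_j$; $X^{(\boldsymbol\alpha)}=X_1\times\prod_j\Lambda^{(\alpha_j)}(m_j,p_j)$ (invariant under $\varGamma_1,\varGamma_2$); $F^{(\boldsymbol\alpha)}_{j,k}=(\delta_{j,k}p_k+B_{j,k}m_k)/\alpha_k$. $F^{(\boldsymbol\alpha)}\mathbb Z^N\backslash\mathbb Z^N$ is the set of cosets of the subgroup $F^{(\boldsymbol\alpha)}\mathbb Z^N\subset\mathbb Z^N$. *)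

theory Defs
  imports Main "HOL-Library.Function_Algebras"
begin

text \<open>Index set {1..N} is modelled by a finite type 'n; vectors in Z^N are functions 'n => int.
  Sequences (lambda_i)_{i in Z} are functions int => int.\<close>

definition Lam :: "int \<Rightarrow> int \<Rightarrow> (int \<Rightarrow> int) set" where
  "Lam m p = {lam. lam 1 = 0 \<and> (\<forall>i. lam i \<le> lam (i + 1)) \<and> (\<forall>i. lam (i + m) = lam i + p)}"

definition Lam_alpha :: "int \<Rightarrow> int \<Rightarrow> int \<Rightarrow> (int \<Rightarrow> int) set" where
  "Lam_alpha a m p = {lam. lam \<in> Lam (m div a) (p div a) \<and>
     (\<forall>a'. a' > a \<and> a' dvd m \<and> a' dvd p \<longrightarrow> lam \<notin> Lam (m div a') (p div a'))}"

definition X_alpha :: "('n \<Rightarrow> int) \<Rightarrow> ('n \<Rightarrow> int) \<Rightarrow> ('n \<Rightarrow> int)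
    \<Rightarrow> (('n \<Rightarrow> int) \<times> ('n \<Rightarrow> int \<Rightarrow> int)) set" where
  "X_alpha a m p = {(\<omega>, lam). \<forall>j. lam j \<in> Lam_alpha (a j) (m j) (p j)}"

text \<open>Action of H_2 (free abelian group on s_1..s_N, element g = sum_k n_k s_k given by n).\<close>
definition Gamma2 :: "('n::finite \<Rightarrow> 'n \<Rightarrow> int) \<Rightarrow> ('n \<Rightarrow> int)
    \<Rightarrow> ('n \<Rightarrow> int) \<times> ('n \<Rightarrow> int \<Rightarrow> int) \<Rightarrow> ('n \<Rightarrow> int) \<times> ('n \<Rightarrow> int \<Rightarrow> int)" where
  "Gamma2 B n x = (case x of (\<omega>, lam) \<Rightarrow>
     (\<lambda>j. \<omega> j + lam j (n j + 1) + (\<Sum>k\<in>UNIV. B j k * n k),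
      \<lambda>j i. lam j (n j + i) - lam j (n j + 1)))"

definition Gamma1 :: "('h \<Rightarrow> ('n \<Rightarrow> int)) \<Rightarrow> 'h
    \<Rightarrow> ('n \<Rightarrow> int) \<times> ('n \<Rightarrow> int \<Rightarrow> int) \<Rightarrow> ('n \<Rightarrow> int) \<times> ('n \<Rightarrow> int \<Rightarrow> int)" where
  "Gamma1 \<psi> f x = (case x of (\<omega>, lam) \<Rightarrow> (\<omega> + \<psi> f, lam))"

definition orbit2 :: "('n::finite \<Rightarrow> 'n \<Rightarrow> int) \<Rightarrow> ('n \<Rightarrow> int) \<times> ('n \<Rightarrow> int \<Rightarrow> int)
    \<Rightarrow> (('n \<Rightarrow> int) \<times> ('n \<Rightarrow> int \<Rightarrow> int)) set" where
  "orbit2 B x = {Gamma2 B n x | n. True}"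

definition Fmat :: "('n \<Rightarrow> 'n \<Rightarrow> int) \<Rightarrow> ('n \<Rightarrow> int) \<Rightarrow> ('n \<Rightarrow> int) \<Rightarrow> ('n \<Rightarrow> int)
    \<Rightarrow> 'n \<Rightarrow> 'n \<Rightarrow> int" where
  "Fmat B a m p j k = ((if j = k then p k else 0) + B j k * m k) div a k"

definition matvec :: "('n::finite \<Rightarrow> 'n \<Rightarrow> int) \<Rightarrow> ('n \<Rightarrow> int) \<Rightarrow> 'n \<Rightarrow> int" where
  "matvec F v = (\<lambda>j. \<Sum>k\<in>UNIV. F j k * v k)"

definition coset :: "('n::finite \<Rightarrow> 'n \<Rightarrow> int) \<Rightarrow> ('n \<Rightarrow> int) \<Rightarrow> ('n \<Rightarrow> int) set" where
  "coset F \<omega> = {\<omega> + matvec F v | v. True}"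

end

theory Submission imports Defs begin

(* Call t a period of a sequence l (with l 1 = 0) if shifting l by t only adds
   the constant l (t + 1).  The periods form a subgroup of Z on which t |-> l (t + 1) is
   additive.  For l in Lam_alpha a m p this subgroup is exactly (m/a) Z, with
   l ((m/a) v + 1) = (p/a) v: the gcd of a period t and m/a is again a period d, and if d were
   a proper divisor of m/a then l would already lie in Lam (m/a') (p/a') for a larger common
   divisor a' of m and p.
   Consequently Gamma2 B n (w, l) has second component l exactly when every n_j is a multiple
   (m_j/a_j) v_j, and then its first component is w + F v with F = Fmat B a m p.  Hence the
   fibre {w'. (w', l) in orbit2 B (w, l)} is precisely the coset w + F Z^N.
   For x = (w0, l) the map Phi O = {w. (w, l) in O} therefore sends the orbit of
   Gamma1 psi f x = (w0 + psi f, l) to the coset of w0 + psi f; it is injective because two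
   orbits with the same fibre share a point, surjective because psi is, and commutes with the
   H_1-actions because Gamma1 only translates the first component. *)

definition is_period :: "(int \<Rightarrow> int) \<Rightarrow> int \<Rightarrow> bool" where
  "is_period l t \<longleftrightarrow> (\<forall>i. l (t + i) = l i + l (t + 1))"

lemma period_zero: "l 1 = 0 \<Longrightarrow> is_period l 0"
  unfolding is_period_def by simp

lemma period_diff:
  assumes l1: "l 1 = 0" and s: "is_period l s" and t: "is_period l t"
  shows "is_period l (s - t) \<and> l (s - t + 1) = l (s + 1) - l (t + 1)"
proof -
  have shift: "l (s - t + i) = l i + l (s + 1) - l (t + 1)" for i
  proof -
    have "l (t + (s - t + i)) = l (s - t + i) + l (t + 1)" using t unfolding is_period_def by blast
    moreover have "l (s + i) = l i + l (s + 1)" using s unfolding is_period_def by blast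
    ultimately show ?thesis by simp
  qed
  moreover have "l (s - t + 1) = l (s + 1) - l (t + 1)" using shift[of 1] l1 by simp
  ultimately show ?thesis unfolding is_period_def by simp
qed

text \<open>Closure under sums, via \<open>s + t = s - (0 - t)\<close>.\<close>
lemma period_add:
  assumes "l 1 = 0" "is_period l s" "is_period l t"
  shows "is_period l (s + t) \<and> l (s + t + 1) = l (s + 1) + l (t + 1)"
proof -
  have neg: "is_period l (0 - t) \<and> l (0 - t + 1) = l 1 - l (t + 1)"
    using period_diff[OF assms(1) period_zero[of l, OF assms(1)] assms(3)] by simp
  show ?thesis using period_diff[OF assms(1,2) conjunct1[OF neg]] neg assms(1) by simp
qed

lemma period_mult:
  assumes l1: "l 1 = 0" and t: "is_period l t"
  shows "is_period l (v * t) \<and> l (v * t + 1) = v * l (t + 1)"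
proof (induction v rule: int_induct[where k = 0])
  case base
  show ?case using period_zero[of l, OF l1] l1 by simp
next
  case (step1 v)
  then show ?case using period_add[OF l1 _ t, of "v * t"] by (simp add: distrib_right)
next
  case (step2 v)
  then show ?case using period_diff[OF l1 _ t, of "v * t"] by (simp add: left_diff_distrib)
qed

lemma period_gcd:
  assumes l1: "l 1 = 0" and "is_period l s" "is_period l t"
  shows "is_period l (gcd s t)"
proof -
  obtain u w where "u * s + w * t = gcd s t" using bezout_int by blast
  then show ?thesis
    using period_add[OF l1 conjunct1[OF period_mult[OF l1 assms(2)]]
                          conjunct1[OF period_mult[OF l1 assms(3)]]] by metis
qed

lemma Lam_period:
  assumes "l \<in> Lam q P"
  shows "l 1 = 0 \<and> is_period l q \<and> l (q + 1) = P"
proof -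
  have l1: "l 1 = 0" and per: "\<And>i. l (i + q) = l i + P" using assms unfolding Lam_def by auto
  have shift: "l (q + i) = l i + P" for i using per[of i] by (simp only: add.commute)
  have "l (q + 1) = P" using shift[of 1] l1 by simp
  then show ?thesis using l1 shift unfolding is_period_def by simp
qed

lemma period_Lam:
  assumes "l 1 = 0" "\<forall>i. l i \<le> l (i + 1)" "is_period l d"
  shows "l \<in> Lam d (l (d + 1))"
proof -
  have "l (i + d) = l i + l (d + 1)" for i
    using assms(3) unfolding is_period_def by (metis add.commute)
  then show ?thesis using assms(1,2) unfolding Lam_def by simp
qed

text \<open>The minimality built into \<open>Lam_alpha\<close>: the periods are exactly the multiples of
  \<open>m div a\<close>.\<close>
lemma Lam_alpha_period_iff:
  assumes l: "l \<in> Lam_alpha a m p" and a: "a > 0" "a dvd m" "a dvd p" and m: "m \<ge> 1"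
  shows "is_period l t \<longleftrightarrow> (m div a) dvd t"
proof
  define q P where "q = m div a" and "P = p div a"
  have mq: "m = a * q" and pP: "p = a * P" using a by (simp_all add: q_def P_def)
  have "0 < a * q" using mq m by simp
  then have qpos: "q > 0" using a by (simp add: zero_less_mult_iff)
  have lam: "l \<in> Lam q P" using l unfolding Lam_alpha_def q_def P_def by simp
  then have l1: "l 1 = 0" and lq: "is_period l q" and Pq: "l (q + 1) = P"
    using Lam_period by blast+
  have mono: "\<forall>i. l i \<le> l (i + 1)" using lam unfolding Lam_def by blast
  assume t: "is_period l t"
  define d where "d = gcd t q"
  have d: "is_period l d" using period_gcd[OF l1 t lq] d_def by simp
  obtain k where qk: "q = d * k" using d_def by (metis dvdE gcd_dvd2)
  have "d \<ge> 0" using d_def by simp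
  then have kpos: "k > 0" using qk qpos by (simp add: zero_less_mult_iff)
  have Pk: "P = k * l (d + 1)"
    using period_mult[OF l1 d, of k] qk Pq by (simp add: mult.commute)
  have "k = 1"
  proof (rule ccontr)
    assume "k \<noteq> 1"
    then have "a * k > a" using kpos a by simp
    moreover have "a * k dvd m" "a * k dvd p" using mq qk pP Pk by simp_all
    moreover have "m div (a * k) = d" "p div (a * k) = l (d + 1)"
      using mq qk pP Pk a kpos by (simp_all add: ac_simps)
    then have "l \<in> Lam (m div (a * k)) (p div (a * k))"
      using period_Lam[OF l1 mono d] by simp
    ultimately show False using l unfolding Lam_alpha_def by blast
  qed
  then show "(m div a) dvd t" using qk d_def q_def by (metis gcd_dvd1 mult.right_neutral)
next
  assume "(m div a) dvd t"
  then obtain v where "t = v * (m div a)" by (metis dvdE mult.commute)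
  moreover have "l 1 = 0" "is_period l (m div a)"
    using Lam_period l unfolding Lam_alpha_def by blast+
  ultimately show "is_period l t" using period_mult by blast
qed

lemma Gamma2_comp: "Gamma2 B n' (Gamma2 B n y) = Gamma2 B (n + n') y"
  by (cases y) (simp add: Gamma2_def fun_eq_iff algebra_simps sum.distrib)

lemma orbit2_Gamma2: "orbit2 B (Gamma2 B n y) = orbit2 B y"
proof -
  have "\<exists>n'. Gamma2 B n'' y = Gamma2 B (n + n') y" for n''
    by (rule exI[of _ "n'' - n"]) simp
  then show ?thesis unfolding orbit2_def by (auto simp: Gamma2_comp)
qed

text \<open>The two actions commute, so \<open>H\<^sub>1\<close> maps orbits to orbits.\<close>
lemma orbit2_Gamma1: "orbit2 B (Gamma1 \<psi> f z) = Gamma1 \<psi> f ` orbit2 B z"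
proof -
  have commute: "Gamma1 \<psi> f (Gamma2 B n y) = Gamma2 B n (Gamma1 \<psi> f y)" for n y
    by (cases y) (simp add: Gamma1_def Gamma2_def fun_eq_iff)
  show ?thesis unfolding orbit2_def by (auto simp: commute[symmetric])
qed

lemma Gamma2_same_lam_iff:
  "Gamma2 B n (\<omega>, l) = (\<omega>', l) \<longleftrightarrow>
     (\<forall>j. is_period (l j) (n j)) \<and> \<omega>' = (\<lambda>j. \<omega> j + l j (n j + 1) + (\<Sum>k\<in>UNIV. B j k * n k))"
proof -
  have "(\<lambda>j i. l j (n j + i) - l j (n j + 1)) = l \<longleftrightarrow> (\<forall>j. is_period (l j) (n j))"
    unfolding is_period_def fun_eq_iff by (simp add: diff_eq_eq)
  then show ?thesis unfolding Gamma2_def by auto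
qed

lemma matvec_Fmat:
  assumes "\<forall>k. a k > 0 \<and> a k dvd m k \<and> a k dvd p k"
  shows "matvec (Fmat B a m p) v j
           = (p j div a j) * v j + (\<Sum>k\<in>UNIV. B j k * ((m k div a k) * v k))"
proof -
  have "matvec (Fmat B a m p) v j
          = (\<Sum>k\<in>UNIV. (if j = k then p k div a k * v k else 0) + B j k * ((m k div a k) * v k))"
    unfolding matvec_def Fmat_def using assms
    by (intro sum.cong) (auto simp: div_plus_div_distrib_dvd_left div_mult_swap algebra_simps)
  then show ?thesis by (simp add: sum.distrib)
qed

lemma matvec_add: "matvec F (v + w) = matvec F v + matvec F w"
  by (simp add: matvec_def fun_eq_iff algebra_simps sum.distrib)

lemma matvec_diff: "matvec F (v - w) = matvec F v - matvec F w"
  by (simp add: matvec_def fun_eq_iff algebra_simps sum_subtractf)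

lemma coset_eq_iff: "coset F \<omega> = coset F \<omega>' \<longleftrightarrow> \<omega>' \<in> coset F \<omega>"
proof
  have "matvec F 0 = 0" by (simp add: matvec_def fun_eq_iff)
  then have "\<omega>' \<in> coset F \<omega>'" unfolding coset_def by (metis (mono_tags) add_0_right mem_Collect_eq)
  then show "coset F \<omega> = coset F \<omega>' \<Longrightarrow> \<omega>' \<in> coset F \<omega>" by simp
next
  assume "\<omega>' \<in> coset F \<omega>"
  then obtain v where v: "\<omega>' = \<omega> + matvec F v" unfolding coset_def by blast
  have "\<omega> + matvec F u = \<omega>' + matvec F (u - v)" "\<omega>' + matvec F u = \<omega> + matvec F (v + u)" for u
    using v by (simp_all add: matvec_add matvec_diff algebra_simps)
  then show "coset F \<omega> = coset F \<omega>'" unfolding coset_def by blast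
qed

lemma coset_translate: "(\<lambda>\<omega>. \<omega> + c) ` coset F \<omega>0 = coset F (\<omega>0 + c)"
  unfolding coset_def by (auto simp: algebra_simps)

lemma orbit2_fibre:
  fixes a m p :: "'n::finite \<Rightarrow> int" and l :: "'n \<Rightarrow> int \<Rightarrow> int"
  assumes m_pos: "\<forall>j. m j \<ge> 1"
    and a_pos: "\<forall>j. a j > 0 \<and> a j dvd m j \<and> a j dvd p j"
    and l: "\<forall>j. l j \<in> Lam_alpha (a j) (m j) (p j)"
  shows "{\<omega>'. (\<omega>', l) \<in> orbit2 B (\<omega>, l)} = coset (Fmat B a m p) \<omega>"
proof -
  define q F where "q = (\<lambda>j. m j div a j)" and "F = Fmat B a m p"
  have periods: "is_period (l j) t \<longleftrightarrow> q j dvd t" for j t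
    using Lam_alpha_period_iff l a_pos m_pos q_def by blast
  have increment: "l j (q j * v + 1) = (p j div a j) * v" for j v
    using period_mult[of "l j" "q j" v] Lam_period[of "l j" "q j" "p j div a j"] l
    unfolding Lam_alpha_def q_def by (simp add: mult.commute)
  have lattice_shift: "Gamma2 B (\<lambda>j. q j * v j) (\<omega>, l) = (\<omega> + matvec F v, l)" for v
  proof -
    have "\<omega> j + l j (q j * v j + 1) + (\<Sum>k\<in>UNIV. B j k * (q k * v k)) = (\<omega> + matvec F v) j" for j
      using increment matvec_Fmat[OF a_pos] q_def F_def by simp
    moreover have "is_period (l j) (q j * v j)" for j using periods by simp
    ultimately show ?thesis unfolding Gamma2_same_lam_iff by (simp add: fun_eq_iff)
  qed
  have stabiliser: "\<exists>v. n = (\<lambda>j. q j * v j)" if "Gamma2 B n (\<omega>, l) = (\<omega>', l)" for n \<omega>'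
  proof -
    have "\<forall>j. \<exists>v. n j = q j * v"
      using that periods unfolding Gamma2_same_lam_iff dvd_def by blast
    then obtain v where "\<forall>j. n j = q j * v j" by metis
    then show ?thesis by auto
  qed
  have "(\<omega>', l) \<in> orbit2 B (\<omega>, l) \<longleftrightarrow> (\<exists>n. Gamma2 B n (\<omega>, l) = (\<omega>', l))" for \<omega>'
    unfolding orbit2_def by (auto intro: sym)
  also have "\<dots> \<omega>' \<longleftrightarrow> (\<exists>v. Gamma2 B (\<lambda>j. q j * v j) (\<omega>, l) = (\<omega>', l))" for \<omega>'
    using stabiliser by blast
  also have "\<dots> \<omega>' \<longleftrightarrow> \<omega>' \<in> coset F \<omega>" for \<omega>'
    unfolding lattice_shift coset_def by auto
  finally show ?thesis unfolding F_def by blast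
qed

lemma orbit2_eq_of_mem: "z \<in> orbit2 B y \<Longrightarrow> orbit2 B z = orbit2 B y"
  unfolding orbit2_def using orbit2_Gamma2[unfolded orbit2_def] by blast

lemma bij_betw_ranges:
  assumes "\<And>\<omega>. \<Phi> (g \<omega>) = h \<omega>" and "\<And>\<omega> \<omega>'. g \<omega> = g \<omega>' \<longleftrightarrow> h \<omega> = h \<omega>'"
  shows "bij_betw \<Phi> (range g) (range h)"
proof (rule bij_betw_imageI)
  show "inj_on \<Phi> (range g)" using assms by (intro inj_onI) auto
  show "\<Phi> ` range g = range h" using assms by (simp add: image_image)
qed

theorem mainTheorem7:
  fixes m p a :: "'n::finite \<Rightarrow> int"
    and B :: "'n \<Rightarrow> 'n \<Rightarrow> int"
    and \<psi> :: "'h::ab_group_add \<Rightarrow> ('n \<Rightarrow> int)"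
    and x :: "('n \<Rightarrow> int) \<times> ('n \<Rightarrow> int \<Rightarrow> int)"
  assumes m_pos: "\<forall>j. m j \<ge> 1"
    and p_nonneg: "\<forall>j. p j \<ge> 0"
    and a_pos: "\<forall>j. a j > 0 \<and> a j dvd m j \<and> a j dvd p j"
    and psi_hom: "\<forall>f g. \<psi> (f + g) = \<psi> f + \<psi> g"
    and psi_surj: "surj \<psi>"
    and x_in: "x \<in> X_alpha a m p"
  shows "\<exists>\<Phi>. bij_betw \<Phi> {orbit2 B (Gamma1 \<psi> f x) | f. True}
                        (range (coset (Fmat B a m p)))
          \<and> (\<forall>f z \<omega>. orbit2 B z \<in> {orbit2 B (Gamma1 \<psi> f x) | f. True}
                  \<longrightarrow> \<Phi> (orbit2 B z) = coset (Fmat B a m p) \<omega>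
                  \<longrightarrow> \<Phi> (orbit2 B (Gamma1 \<psi> f z)) = coset (Fmat B a m p) (\<omega> + \<psi> f))"
proof -
  obtain \<omega>0 l where x: "x = (\<omega>0, l)" by (cases x)
  have l: "\<forall>j. l j \<in> Lam_alpha (a j) (m j) (p j)" using x_in x unfolding X_alpha_def by simp
  define F where "F = Fmat B a m p"
  define \<Phi> :: "(('n \<Rightarrow> int) \<times> ('n \<Rightarrow> int \<Rightarrow> int)) set \<Rightarrow> ('n \<Rightarrow> int) set"
    where "\<Phi> = (\<lambda>Q. {\<omega>. (\<omega>, l) \<in> Q})"
  have fibre: "\<Phi> (orbit2 B (\<omega>, l)) = coset F \<omega>" for \<omega>
    using orbit2_fibre[OF m_pos a_pos l] unfolding \<Phi>_def F_def by simp
  have same_orbit: "orbit2 B (\<omega>, l) = orbit2 B (\<omega>', l) \<longleftrightarrow> coset F \<omega> = coset F \<omega>'" for \<omega> \<omega>'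
  proof
    assume "coset F \<omega> = coset F \<omega>'"
    then have "\<omega>' \<in> \<Phi> (orbit2 B (\<omega>, l))" unfolding fibre coset_eq_iff .
    then have "(\<omega>', l) \<in> orbit2 B (\<omega>, l)" unfolding \<Phi>_def by simp
    then show "orbit2 B (\<omega>, l) = orbit2 B (\<omega>', l)" by (rule orbit2_eq_of_mem[symmetric])
  qed (use fibre in metis)
  have "Gamma1 \<psi> f x = (\<omega>0 + \<psi> f, l)" for f using x by (simp add: Gamma1_def)
  then have "{orbit2 B (Gamma1 \<psi> f x) | f. True}
               = (\<lambda>\<omega>. orbit2 B (\<omega>, l)) ` range (\<lambda>f. \<omega>0 + \<psi> f)"
    by auto
  moreover have "range (\<lambda>f. \<omega>0 + \<psi> f) = UNIV"
  proof (intro set_eqI iffI)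
    fix \<omega> :: "'n \<Rightarrow> int"
    obtain f where "\<omega> - \<omega>0 = \<psi> f" using surjD[OF psi_surj] by blast
    then show "\<omega> \<in> range (\<lambda>f. \<omega>0 + \<psi> f)" by (intro range_eqI[of _ _ f]) (simp add: algebra_simps)
  qed simp
  ultimately have orbits: "{orbit2 B (Gamma1 \<psi> f x) | f. True} = range (\<lambda>\<omega>. orbit2 B (\<omega>, l))"
    by simp
  have "bij_betw \<Phi> {orbit2 B (Gamma1 \<psi> f x) | f. True} (range (coset F))"
    unfolding orbits using fibre same_orbit by (rule bij_betw_ranges)
  moreover have "\<Phi> (orbit2 B (Gamma1 \<psi> f z)) = coset F (\<omega> + \<psi> f)"
    if "\<Phi> (orbit2 B z) = coset F \<omega>" for f z \<omega>
  proof -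
    have "\<Phi> (Gamma1 \<psi> f ` Q) = (\<lambda>\<omega>. \<omega> + \<psi> f) ` \<Phi> Q" for Q
      unfolding \<Phi>_def Gamma1_def by (auto simp: image_iff intro!: bexI)
    then show ?thesis using that orbit2_Gamma1 coset_translate by metis
  qed
  ultimately show ?thesis unfolding F_def by blast
qed

end
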